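(* Let $n\ge8$, $m\in\mathbb N$, $p\in(0,1)$, and let $\mathcal I=\{11,12,21,22\}$. For $i=1,2,3$, $$\|\bar g_{l_{i,1}}\ast_{l_{i,3}}^{l_{i,2}}\bar g_{l_{i,4}}\|_2^2=\sum_{I\subseteq\mathcal I}(-1)^{|I|}\pi(H_{i,I}),$$ where $(l_{1,1},l_{1,2},l_{1,3},l_{1,4})=(1,0,1,1)$, $(l_{2,1},l_{2,2},l_{2,3},l_{2,4})=(2,1,1,2)$, $(l_{3,1},l_{3,2},l_{3,3},l_{3,4})=(2,1,1,1)$; that is, $\|\bar g_1\ast_1^0\bar g_1\|_2^2$, $\|\bar g_2\ast_1^1\bar g_2\|_2^2$ and $\|\bar g_2\ast_1^1\bar g_1\|_2^2$ equal the corresponding sums for $i=1,2,3$ respectively.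
   Context: Random intersection graph $\mathcal G(n,m,p)$: vertices $v_1,\ldots,v_n$, attributes $a_1,\ldots,a_m$; each vertex chooses each attribute independently with probability $p$; two vertices are adjacent iff they chose a common attribute; $\hat p=1-(1-p^2)^m$. For a graph $H$ with vertices among $v_1,\ldots,v_n$, $\pi(H)=\mathbb P(H\subseteq\mathcal G(n,m,p))$ (depends only on the isomorphism type of $H$); $\pi$ of the graph with no vertices is $1$. $\mu_{m,p}(x)=p^{|x|}(1-p)^{m-|x|}$ on $\{0,1\}^m$; $g(x,y)=1$ if $x_i=y_i=1$ for some $i$, else $0$; $g_1(x)=\int g(x,y)\,d\mu_{m,p}(y)$; $\bar g_2=g-\hat p$, $\bar g_1=g_1-\hat p$; norms are $L^2$ with respect to products of $\mu_{m,p}$; contraction $f\ast_b^ah(x_1,..,x_{b-a},y_1,..,y_{k-b},z_1,..,z_{l-b})=\int f(w,x,y)h(w,x,z)\,d\mu_{m,p}^{\otimes a}(w)$ for $f$ on $(\{0,1\}^m)^k$, $h$ on $(\{0,1\}^m)^l$. Graphs with edges labelled by $\mathcal I$: $G_1$ is the star $K_{1,4}$ with centre $v$ and leaves $u_{11},u_{12},u_{21},u_{22}$, edges $e_{ab}=\{v,u_{ab}\}$; $G_2$ is the $4$-cycle on $x_1,x_2,y_1,y_2$ with edges $e_{ab}=\{x_a,y_b\}$; $G_3$ is the path on $z_{12},x_1,y,x_2,z_{22}$ with edges $e_{11}=\{x_1,y\}$, $e_{12}=\{x_1,z_{12}\}$, $e_{21}=\{x_2,y\}$, $e_{22}=\{x_2,z_{22}\}$.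 For $I\subseteq\mathcal I$, $G_{i,I}$ is the subgraph of $G_i$ induced by the edges $e_{ab}$, $ab\in I$. $H_{i,I}$ is a graph on $8$ vertices from $\{v_1,\ldots,v_n\}$ consisting of a copy of $G_{i,I}$, together with $4-|I|$ further pairwise vertex-disjoint edges (disjoint from $G_{i,I}$), and isolated vertices. *)

theory Defs
  imports Complex_Main "HOL-Library.FuncSet"
begin

text \<open>Points of {0,1}^m are represented as subsets x of {..<m} (the set of attributes
  i with x_i = 1).  Vertices v_1..v_n are 0..n-1, attributes a_1..a_m are 0..m-1.\<close>

definition cube :: "nat \<Rightarrow> nat set set" where
  "cube m = Pow {..<m}"

definition mu :: "nat \<Rightarrow> real \<Rightarrow> nat set \<Rightarrow> real" where
  "mu m p x = p ^ card x * (1 - p) ^ (m - card x)"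

definition phat :: "nat \<Rightarrow> real \<Rightarrow> real" where
  "phat m p = 1 - (1 - p ^ 2) ^ m"

definition gfun :: "nat set \<Rightarrow> nat set \<Rightarrow> real" where
  "gfun x y = (if x \<inter> y \<noteq> {} then 1 else 0)"

definition g1 :: "nat \<Rightarrow> real \<Rightarrow> nat set \<Rightarrow> real" where
  "g1 m p x = (\<Sum>y\<in>cube m. gfun x y * mu m p y)"

text \<open>Functions on (\{0,1\}^m)^k are functions on lists of points of length k.\<close>

definition points :: "nat \<Rightarrow> nat \<Rightarrow> nat set list set" where
  "points m k = {xs. length xs = k \<and> set xs \<subseteq> cube m}"

definition mu_prod :: "nat \<Rightarrow> real \<Rightarrow> nat set list \<Rightarrow> real" where
  "mu_prod m p xs = prod_list (map (mu m p) xs)"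

definition gbar :: "nat \<Rightarrow> real \<Rightarrow> nat \<Rightarrow> nat set list \<Rightarrow> real" where
  "gbar m p j xs = (if j = 1 then g1 m p (xs ! 0) - phat m p
                    else gfun (xs ! 0) (xs ! 1) - phat m p)"

text \<open>Contraction f *_b^a h for f of arity k (and h of arity l):
  the argument list is (x_1..x_{b-a}, y_1..y_{k-b}, z_1..z_{l-b}) and
  the value is the integral over w in (\{0,1\}^m)^a of f(w,x,y) h(w,x,z).\<close>

definition contr :: "nat \<Rightarrow> real \<Rightarrow> (nat set list \<Rightarrow> real) \<Rightarrow> nat \<Rightarrow>
    (nat set list \<Rightarrow> real) \<Rightarrow> nat \<Rightarrow> nat \<Rightarrow> nat set list \<Rightarrow> real" where
  "contr m p f k h a b args =
     (let xs = take (b - a) args;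
          ys = take (k - b) (drop (b - a) args);
          zs = drop ((b - a) + (k - b)) args
      in (\<Sum>ws\<in>points m a. mu_prod m p ws * f (ws @ xs @ ys) * h (ws @ xs @ zs)))"

definition norm2sq :: "nat \<Rightarrow> real \<Rightarrow> nat \<Rightarrow> (nat set list \<Rightarrow> real) \<Rightarrow> real" where
  "norm2sq m p r f = (\<Sum>xs\<in>points m r. mu_prod m p xs * (f xs) ^ 2)"

text \<open>pi(E): probability that every edge of E is an edge of G(n,m,p).  A configuration
  S assigns to each vertex v < n its attribute set; its probability is the product of
  mu(S v); u,v (u \<noteq> v) are adjacent iff S u \<inter> S v \<noteq> {}.\<close>

definition piH :: "nat \<Rightarrow> nat \<Rightarrow> real \<Rightarrow> nat set set \<Rightarrow> real" where
  "piH n m p E = (\<Sum>S\<in>PiE {..<n} (\<lambda>_. cube m).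
      (if (\<forall>u v. {u, v} \<in> E \<longrightarrow> u \<noteq> v \<longrightarrow> S u \<inter> S v \<noteq> {}) then 1 else 0)
      * (\<Prod>v<n. mu m p (S v)))"

text \<open>Edge labels 11,12,21,22 are the pairs (a,b).\<close>

definition Ilab :: "(nat \<times> nat) set" where
  "Ilab = {(1,1), (1,2), (2,1), (2,2)}"

text \<open>Abstract vertices of G_1: v=0, u11=1, u12=2, u21=3, u22=4.
  G_2: x1=0, x2=1, y1=2, y2=3.  G_3: z12=0, x1=1, y=2, x2=3, z22=4.\<close>

definition Gedge :: "nat \<Rightarrow> nat \<times> nat \<Rightarrow> nat set" where
  "Gedge i ab = (let (a, b) = ab in
     if i = 1 then {0, 2 * a + b - 2}
     else if i = 2 then {a - 1, b + 1}
     else (if ab = (1,1) then {1, 2} else if ab = (1,2) then {1, 0}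
           else if ab = (2,1) then {3, 2} else {3, 4}))"

definition GI_edges :: "nat \<Rightarrow> (nat \<times> nat) set \<Rightarrow> nat set set" where
  "GI_edges i I = Gedge i ` I"

definition GI_verts :: "nat \<Rightarrow> (nat \<times> nat) set \<Rightarrow> nat set" where
  "GI_verts i I = \<Union> (GI_edges i I)"

definition is_H :: "nat \<Rightarrow> nat \<Rightarrow> (nat \<times> nat) set \<Rightarrow> nat set \<times> nat set set \<Rightarrow> bool" where
  "is_H n i I H = (let V = fst H; E = snd H in
     V \<subseteq> {..<n} \<and> card V = 8 \<and>
     (\<exists>\<phi> M. inj_on \<phi> (GI_verts i I) \<and> \<phi> ` GI_verts i I \<subseteq> V \<and>
        (\<forall>e\<in>M. card e = 2 \<and> e \<subseteq> V) \<and> finite M \<and> card M = 4 - card I \<and>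
        (\<forall>e\<in>M. \<forall>e'\<in>M. e \<noteq> e' \<longrightarrow> e \<inter> e' = {}) \<and>
        \<Union> M \<inter> \<phi> ` GI_verts i I = {} \<and>
        E = (\<lambda>e. \<phi> ` e) ` GI_edges i I \<union> M))"

definition lpar :: "nat \<Rightarrow> nat \<times> nat \<times> nat \<times> nat" where
  "lpar i = (if i = 1 then (1,0,1,1) else if i = 2 then (2,1,1,2) else (2,1,1,1))"

end

theory Submission
  imports Defs
begin

(*
  Realise G(n,m,p) by independent attribute sets S v ~ mu_{m,p} of the vertices v.  Then
  pi(E) is the expectation of the product of the edge indicators g(S u, S v), {u,v} in E.
  In H_{i,I} the 4 - |I| extra edges form a matching on vertices outside the copy of G_{i,I},
  so they are independent of it and each contributes a factor phat; hence the alternating sum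
  over I is the inclusion-exclusion expansion of E prod_{ab} (g(S e_ab) - phat) over a single
  copy of G_i.  Integrating this expectation first over the vertices that correspond to the
  free variables of the contraction (the centre v of the star, y_1 and y_2 of the cycle, the
  middle vertex y of the path) and then over the remaining ones reproduces the iterated
  integral defining the squared norm of the contraction.
*)

section \<open>The measure mu_{m,p} on the cube\<close>

lemma finite_cube [simp]: "finite (cube m)"
  by (simp add: cube_def)

lemma sum_cube_Suc:
  "(\<Sum>x\<in>cube (Suc m). f x) = (\<Sum>x\<in>cube m. f x) + (\<Sum>x\<in>cube m. f (insert m x))"
proof -
  have "cube (Suc m) = cube m \<union> insert m ` cube m"
    by (simp add: cube_def lessThan_Suc Pow_insert)
  moreover have "cube m \<inter> insert m ` cube m = {}" "inj_on (insert m) (cube m)"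
    by (auto simp: cube_def inj_on_def)
  ultimately show ?thesis
    by (simp add: sum.union_disjoint sum.reindex)
qed

lemma card_le_if_in_cube: "x \<in> cube m \<Longrightarrow> card x \<le> m"
  unfolding cube_def by (metis PowD card_lessThan card_mono finite_lessThan)

lemma mu_Suc: "x \<in> cube m \<Longrightarrow> mu (Suc m) p x = (1 - p) * mu m p x"
  by (simp add: mu_def card_le_if_in_cube Suc_diff_le)

lemma mu_Suc_insert: "x \<in> cube m \<Longrightarrow> mu (Suc m) p (insert m x) = p * mu m p x"
proof -
  assume x: "x \<in> cube m"
  then have "finite x" "m \<notin> x"
    by (auto simp: cube_def finite_subset)
  with x show ?thesis
    by (simp add: mu_def card_le_if_in_cube)
qed

lemma sum_mu_eq_1: "(\<Sum>x\<in>cube m. mu m p x) = 1"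
proof (induction m)
  case (Suc m)
  then show ?case
    by (simp add: sum_cube_Suc mu_Suc mu_Suc_insert flip: sum_distrib_left)
qed (simp add: cube_def mu_def)

lemma sum_mu_disjoint:
  "(\<Sum>x\<in>cube m. \<Sum>y\<in>cube m. mu m p x * mu m p y * (if x \<inter> y = {} then 1 else 0)) = (1 - p\<^sup>2) ^ m"
proof (induction m)
  case (Suc m)
  have "m \<notin> x" if "x \<in> cube m" for x
    using that by (auto simp: cube_def)
  then show ?case
    by (simp add: sum_cube_Suc mu_Suc mu_Suc_insert sum.distrib ac_simps flip: sum_distrib_left Suc)
       (simp add: algebra_simps power2_eq_square)
qed (simp add: cube_def mu_def)

lemma sum_mu_gfun: "(\<Sum>x\<in>cube m. \<Sum>y\<in>cube m. mu m p x * mu m p y * gfun x y) = phat m p"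
proof -
  have "gfun x y = 1 - (if x \<inter> y = {} then 1 else 0)" for x y
    by (simp add: gfun_def)
  then show ?thesis
    by (simp add: right_diff_distrib sum_subtractf sum_mu_disjoint phat_def
        flip: sum_distrib_left sum_distrib_right)
       (simp add: sum_mu_eq_1)
qed

section \<open>Expectations over attribute configurations\<close>

definition config_expect :: "nat \<Rightarrow> real \<Rightarrow> nat set \<Rightarrow> ((nat \<Rightarrow> nat set) \<Rightarrow> real) \<Rightarrow> real" where
  "config_expect m p A F = (\<Sum>S\<in>PiE A (\<lambda>_. cube m). (\<Prod>v\<in>A. mu m p (S v)) * F S)"

definition depends_on :: "'v set \<Rightarrow> (('v \<Rightarrow> 'a) \<Rightarrow> 'b) \<Rightarrow> bool" where
  "depends_on B F \<longleftrightarrow> (\<forall>S S'. (\<forall>v\<in>B. S v = S' v) \<longrightarrow> F S = F S')"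

lemma config_expect_empty [simp]: "config_expect m p {} F = F (\<lambda>_. undefined)"
  by (simp add: config_expect_def)

lemma config_expect_insert:
  assumes "finite A" "a \<notin> A"
  shows "config_expect m p (insert a A) F =
    (\<Sum>x\<in>cube m. mu m p x * config_expect m p A (\<lambda>S. F (S(a := x))))"
proof -
  have "config_expect m p (insert a A) F =
     (\<Sum>(x, S)\<in>cube m \<times> PiE A (\<lambda>_. cube m).
        (\<Prod>v\<in>insert a A. mu m p ((S(a := x)) v)) * F (S(a := x)))"
    unfolding config_expect_def PiE_insert_eq
    by (subst sum.reindex[OF inj_combinator[OF assms(2)]]) (simp add: case_prod_unfold)
  also have "\<dots> = (\<Sum>(x, S)\<in>cube m \<times> PiE A (\<lambda>_. cube m).
        mu m p x * ((\<Prod>v\<in>A. mu m p (S v)) * F (S(a := x))))"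
  proof -
    have "(\<Prod>v\<in>A. mu m p ((S(a := x)) v)) = (\<Prod>v\<in>A. mu m p (S v))" for S x
      using assms(2) by (intro prod.cong) auto
    with assms show ?thesis
      by (simp add: mult.assoc)
  qed
  finally show ?thesis
    by (simp add: config_expect_def sum_distrib_left flip: sum.cartesian_product)
qed

lemma config_expect_cmult: "config_expect m p A (\<lambda>S. c * F S) = c * config_expect m p A F"
  by (simp add: config_expect_def sum_distrib_left ac_simps)

lemma config_expect_sum:
  "config_expect m p A (\<lambda>S. \<Sum>I\<in>X. F I S) = (\<Sum>I\<in>X. config_expect m p A (F I))"
  by (simp add: config_expect_def sum_distrib_left sum.swap[of _ X])

lemma config_expect_prod_minus:
  assumes "finite J"
  shows "config_expect m p A (\<lambda>S. \<Prod>j\<in>J. X j S - c) =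
    (\<Sum>I\<in>Pow J. (- c) ^ card (J - I) * config_expect m p A (\<lambda>S. \<Prod>j\<in>I. X j S))"
proof -
  have "(\<Prod>j\<in>J. X j S - c) = (\<Sum>I\<in>Pow J. (- c) ^ card (J - I) * (\<Prod>j\<in>I. X j S))" for S
    using prod_add[OF assms, of "\<lambda>j. X j S" "\<lambda>_. - c"] by (simp add: mult.commute)
  then show ?thesis
    by (simp add: config_expect_sum config_expect_cmult)
qed

lemma config_expect_const: "finite A \<Longrightarrow> config_expect m p A (\<lambda>_. c) = c"
  by (induction A rule: finite_induct)
     (simp_all add: config_expect_insert sum_mu_eq_1 flip: sum_distrib_right)

lemma depends_on_mono: "depends_on B F \<Longrightarrow> B \<subseteq> C \<Longrightarrow> depends_on C F"
  unfolding depends_on_def by blast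

lemma depends_on_mult:
  "depends_on B F \<Longrightarrow> depends_on B G \<Longrightarrow> depends_on B (\<lambda>S. F S * G S)"
  unfolding depends_on_def by (intro allI impI arg_cong2[where f = "(*)"]) auto

lemma depends_on_prod:
  "(\<And>x. x \<in> X \<Longrightarrow> depends_on B (F x)) \<Longrightarrow> depends_on B (\<lambda>S. \<Prod>x\<in>X. F x S)"
  unfolding depends_on_def by (auto intro: prod.cong)

lemma depends_on_upd:
  "depends_on (insert a B) F \<Longrightarrow> depends_on B (\<lambda>S. F (S(a := x)))"
  unfolding depends_on_def by auto

lemma config_expect_disjoint_union_mult:
  assumes "finite B" "finite C" "B \<inter> C = {}" "depends_on B F" "depends_on C G"
  shows "config_expect m p (B \<union> C) (\<lambda>S. F S * G S) =
    config_expect m p B F * config_expect m p C G"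
  using assms(2-5)
proof (induction C arbitrary: G rule: finite_induct)
  case empty
  then obtain c where "G S = c" for S
    by (metis depends_on_def empty_iff)
  then show ?case
    by (simp add: config_expect_cmult mult.commute)
next
  case (insert c C)
  have "F (S(c := x)) = F S" for S x
    using insert.prems by (auto simp: depends_on_def)
  then have "config_expect m p (B \<union> insert c C) (\<lambda>S. F S * G S) =
      (\<Sum>x\<in>cube m. mu m p x * config_expect m p (B \<union> C) (\<lambda>S. F S * G (S(c := x))))"
    using insert assms(1) by (simp add: config_expect_insert)
  also have "\<dots> = (\<Sum>x\<in>cube m.
      mu m p x * (config_expect m p B F * config_expect m p C (\<lambda>S. G (S(c := x)))))"
    using insert.prems insert.IH[of "\<lambda>S. G (S(c := x))" for x] by (simp add: depends_on_upd)
  also have "\<dots> = config_expect m p B F * config_expect m p (insert c C) G"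
    using insert.hyps by (simp add: config_expect_insert sum_distrib_left ac_simps)
  finally show ?case .
qed

lemma config_expect_superset:
  assumes "finite A" "B \<subseteq> A" "depends_on B F"
  shows "config_expect m p A F = config_expect m p B F"
proof -
  have "config_expect m p (B \<union> (A - B)) (\<lambda>S. F S * 1) =
      config_expect m p B F * config_expect m p (A - B) (\<lambda>_. 1)"
    using assms finite_subset
    by (intro config_expect_disjoint_union_mult) (auto simp: depends_on_def)
  with assms show ?thesis
    by (simp add: config_expect_const Un_absorb1)
qed

lemma config_expect_reindex:
  assumes "finite V" "inj_on \<phi> V" "depends_on V G"
  shows "config_expect m p (\<phi> ` V) (\<lambda>S. G (\<lambda>v. S (\<phi> v))) = config_expect m p V G"
  using assms
proof (induction V arbitrary: G rule: finite_induct)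
  case (insert a V)
  have "\<phi> a \<notin> \<phi> ` V"
    using insert by auto
  with insert.hyps have "config_expect m p (\<phi> ` insert a V) (\<lambda>S. G (\<lambda>v. S (\<phi> v))) =
      (\<Sum>x\<in>cube m. mu m p x * config_expect m p (\<phi> ` V) (\<lambda>S. G (\<lambda>v. (S(\<phi> a := x)) (\<phi> v))))"
    unfolding image_insert by (intro config_expect_insert) auto
  also have "\<dots> = (\<Sum>x\<in>cube m. mu m p x *
      config_expect m p (\<phi> ` V) (\<lambda>S. G ((\<lambda>v. S (\<phi> v))(a := x))))"
  proof -
    have "G (\<lambda>v. (S(\<phi> a := x)) (\<phi> v)) = G ((\<lambda>v. S (\<phi> v))(a := x))" for S x
      using insert.prems unfolding depends_on_def inj_on_def by auto
    then show ?thesis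
      by presburger
  qed
  also have "\<dots> = (\<Sum>x\<in>cube m. mu m p x * config_expect m p V (\<lambda>S. G (S(a := x))))"
    using insert.prems insert.IH[of "\<lambda>T. G (T(a := x))" for x] by (simp add: depends_on_upd)
  also have "\<dots> = config_expect m p (insert a V) G"
    using insert.hyps by (simp add: config_expect_insert)
  finally show ?case .
qed simp

lemma config_expect_prod_coords:
  "finite B \<Longrightarrow>
    config_expect m p B (\<lambda>S. \<Prod>b\<in>B. f b (S b)) = (\<Prod>b\<in>B. \<Sum>x\<in>cube m. mu m p x * f b x)"
proof (induction B rule: finite_induct)
  case (insert b B)
  have "(\<Prod>c\<in>B. f c ((S(b := x)) c)) = (\<Prod>c\<in>B. f c (S c))" for S x
    using insert.hyps by (intro prod.cong) auto
  with insert show ?case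
    by (simp add: config_expect_insert config_expect_cmult sum_distrib_right ac_simps)
qed simp

lemma config_expect_prod_iid:
  "finite B \<Longrightarrow> config_expect m p B (\<lambda>S. \<Prod>b\<in>B. f (S b)) = (\<Sum>x\<in>cube m. mu m p x * f x) ^ card B"
  using config_expect_prod_coords[of B m p "\<lambda>_. f"] by simp

lemma config_expect_star:
  assumes "finite B" "a \<notin> B"
  shows "config_expect m p (insert a B) (\<lambda>S. \<Prod>b\<in>B. f (S a) (S b)) =
    (\<Sum>x\<in>cube m. mu m p x * (\<Sum>y\<in>cube m. mu m p y * f x y) ^ card B)"
proof -
  have "(\<Prod>b\<in>B. f ((S(a := x)) a) ((S(a := x)) b)) = (\<Prod>b\<in>B. f x (S b))" for S x
    using assms(2) by (intro prod.cong) auto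
  with assms show ?thesis
    by (simp add: config_expect_insert config_expect_prod_iid)
qed

lemma config_expect_bipartite:
  assumes "finite W" "a \<notin> W" "b \<notin> W" "a \<noteq> b"
  shows "config_expect m p (insert a (insert b W)) (\<lambda>S. \<Prod>w\<in>W. f (S a) (S b) (S w)) =
    (\<Sum>y\<in>cube m. mu m p y * (\<Sum>z\<in>cube m. mu m p z *
      (\<Sum>x\<in>cube m. mu m p x * f y z x) ^ card W))"
proof -
  have "(\<Prod>w\<in>W. f ((S(b := z, a := y)) a) ((S(b := z, a := y)) b) ((S(b := z, a := y)) w)) =
      (\<Prod>w\<in>W. f y z (S w))" for S y z
    using assms(2-4) by (intro prod.cong) auto
  with assms show ?thesis
    by (simp add: config_expect_insert config_expect_prod_iid)
qed

section \<open>Edge indicators and the probabilities pi(H)\<close>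

definition edge_ind :: "(nat \<Rightarrow> nat set) \<Rightarrow> nat set \<Rightarrow> real" where
  "edge_ind S e = (if \<exists>u v. e = {u, v} \<and> u \<noteq> v \<and> S u \<inter> S v \<noteq> {} then 1 else 0)"

lemma edge_ind_doubleton: "u \<noteq> v \<Longrightarrow> edge_ind S {u, v} = gfun (S u) (S v)"
  unfolding edge_ind_def gfun_def by (auto simp: doubleton_eq_iff Int_commute)

lemma edge_ind_image:
  assumes "inj_on \<phi> e" "card e = 2"
  shows "edge_ind S (\<phi> ` e) = edge_ind (\<lambda>v. S (\<phi> v)) e"
proof -
  obtain u v where "e = {u, v}" "u \<noteq> v"
    using assms(2) by (meson card_2_iff)
  with assms(1) show ?thesis
    by (simp add: edge_ind_doubleton)
qed

lemma depends_on_edge_ind: "depends_on e (\<lambda>S. edge_ind S e)"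
  unfolding depends_on_def edge_ind_def by auto blast+

lemma depends_on_prod_edge_ind:
  "(\<And>e. e \<in> E \<Longrightarrow> e \<subseteq> B) \<Longrightarrow> depends_on B (\<lambda>S. \<Prod>e\<in>E. edge_ind S e)"
  by (intro depends_on_prod depends_on_mono[OF depends_on_edge_ind])

lemma prod_edge_ind:
  assumes "finite E" "\<forall>e\<in>E. card e = 2"
  shows "(\<Prod>e\<in>E. edge_ind S e) =
    (if \<forall>u v. {u, v} \<in> E \<longrightarrow> u \<noteq> v \<longrightarrow> S u \<inter> S v \<noteq> {} then 1 else 0)"
proof -
  have "(\<forall>u v. {u, v} \<in> E \<longrightarrow> u \<noteq> v \<longrightarrow> S u \<inter> S v \<noteq> {}) \<longleftrightarrow> (\<forall>e\<in>E. edge_ind S e = 1)"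
  proof (intro iffI allI impI ballI)
    fix e
    assume all: "\<forall>u v. {u, v} \<in> E \<longrightarrow> u \<noteq> v \<longrightarrow> S u \<inter> S v \<noteq> {}" and "e \<in> E"
    then obtain u v where "e = {u, v}" "u \<noteq> v"
      using assms(2) by (meson card_2_iff)
    with all \<open>e \<in> E\<close> show "edge_ind S e = 1"
      by (simp add: edge_ind_doubleton gfun_def)
  next
    fix u v
    assume "\<forall>e\<in>E. edge_ind S e = 1" "{u, v} \<in> E" "u \<noteq> v"
    then have "gfun (S u) (S v) = 1"
      by (metis edge_ind_doubleton)
    then show "S u \<inter> S v \<noteq> {}"
      by (simp add: gfun_def split: if_splits)
  qed
  moreover have "(\<Prod>e\<in>E. edge_ind S e) = (if \<forall>e\<in>E. edge_ind S e = 1 then 1 else 0)"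
    using assms(1) by (induction E rule: finite_induct) (auto simp: edge_ind_def)
  ultimately show ?thesis
    by simp
qed

lemma piH_eq_config_expect:
  assumes "finite E" "\<forall>e\<in>E. card e = 2"
  shows "piH n m p E = config_expect m p {..<n} (\<lambda>S. \<Prod>e\<in>E. edge_ind S e)"
  unfolding piH_def config_expect_def prod_edge_ind[OF assms] by (simp add: mult.commute)

lemma config_expect_edge_ind:
  "u \<noteq> v \<Longrightarrow> config_expect m p {u, v} (\<lambda>S. edge_ind S {u, v}) = phat m p"
  by (simp add: edge_ind_doubleton config_expect_insert sum_distrib_left mult.assoc
      flip: sum_mu_gfun)

lemma finite_Union_card_2: "finite F \<Longrightarrow> \<forall>e\<in>F. card e = 2 \<Longrightarrow> finite (\<Union>F)"
  by (intro finite_Union) (auto intro: card_ge_0_finite)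

lemma config_expect_matching:
  assumes "finite M" "\<forall>e\<in>M. card e = 2" "pairwise disjnt M"
  shows "config_expect m p (\<Union>M) (\<lambda>S. \<Prod>e\<in>M. edge_ind S e) = phat m p ^ card M"
  using assms
proof (induction M rule: finite_induct)
  case (insert e M)
  obtain u v where e: "e = {u, v}" "u \<noteq> v"
    using insert.prems(1) by (meson card_2_iff insertI1)
  have "finite (\<Union>M)"
    using insert.hyps(1) insert.prems(1) by (simp add: finite_Union_card_2)
  moreover have "e \<inter> \<Union>M = {}"
    using insert.prems(2) insert.hyps(2) by (auto simp: pairwise_insert disjnt_def)
  ultimately have "config_expect m p (e \<union> \<Union>M) (\<lambda>S. edge_ind S e * (\<Prod>e\<in>M. edge_ind S e)) =
      config_expect m p e (\<lambda>S. edge_ind S e) * config_expect m p (\<Union>M) (\<lambda>S. \<Prod>e\<in>M. edge_ind S e)"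
    using e
    by (intro config_expect_disjoint_union_mult depends_on_edge_ind depends_on_prod_edge_ind) auto
  also have "\<dots> = phat m p * phat m p ^ card M"
    using e insert.IH insert.prems by (simp add: config_expect_edge_ind pairwise_insert)
  finally show ?case
    using insert.hyps by simp
qed simp

lemma config_expect_image_edges:
  assumes "finite F" "\<forall>e\<in>F. card e = 2" "inj_on \<phi> (\<Union>F)"
  shows "config_expect m p (\<phi> ` \<Union>F) (\<lambda>S. \<Prod>e\<in>F. edge_ind S (\<phi> ` e)) =
    config_expect m p (\<Union>F) (\<lambda>S. \<Prod>e\<in>F. edge_ind S e)"
proof -
  have "(\<Prod>e\<in>F. edge_ind S (\<phi> ` e)) = (\<Prod>e\<in>F. edge_ind (\<lambda>v. S (\<phi> v)) e)" for S
    using assms(2,3) by (intro prod.cong refl edge_ind_image) (auto intro: inj_on_subset)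
  moreover have "finite (\<Union>F)"
    using assms(1,2) by (rule finite_Union_card_2)
  ultimately show ?thesis
    using assms(3) config_expect_reindex[of "\<Union>F" \<phi> "\<lambda>S. \<Prod>e\<in>F. edge_ind S e"]
    by (simp add: depends_on_prod_edge_ind Union_upper)
qed

lemma piH_copy_union_matching:
  assumes F: "finite F" "\<forall>e\<in>F. card e = 2"
    and \<phi>: "inj_on \<phi> (\<Union>F)" "\<phi> ` \<Union>F \<subseteq> {..<n}"
    and M: "finite M" "\<forall>e\<in>M. card e = 2 \<and> e \<subseteq> {..<n}" "pairwise disjnt M"
      "\<Union>M \<inter> \<phi> ` \<Union>F = {}"
  shows "piH n m p ((`) \<phi> ` F \<union> M) =
    phat m p ^ card M * config_expect m p (\<Union>F) (\<lambda>S. \<Prod>e\<in>F. edge_ind S e)"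
proof -
  let ?E = "(`) \<phi> ` F"
  have inj_image: "inj_on ((`) \<phi>) F"
    using inj_on_image_Pow[OF \<phi>(1)] by (rule inj_on_subset) blast
  have card_phi_edge: "card (\<phi> ` e) = 2" if "e \<in> F" for e
  proof -
    have "inj_on \<phi> e"
      using \<phi>(1) Union_upper[OF that] by (rule inj_on_subset)
    then show ?thesis
      using that F(2) by (simp add: card_image)
  qed
  have "\<phi> ` e \<notin> M" if "e \<in> F" for e
  proof
    assume "\<phi> ` e \<in> M"
    moreover have "\<phi> ` e \<noteq> {}"
      using card_phi_edge[OF that] by auto
    ultimately show False
      using M(4) that by blast
  qed
  then have "?E \<inter> M = {}"
    by blast
  then have prod_split: "(\<Prod>e\<in>?E \<union> M. edge_ind S e) =
      (\<Prod>e\<in>F. edge_ind S (\<phi> ` e)) * (\<Prod>e\<in>M. edge_ind S e)" for S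
    using F(1) M(1) inj_image by (simp add: prod.union_disjoint prod.reindex)
  have fin_F: "finite (\<Union>F)" and fin_M: "finite (\<Union>M)"
    using F M by (simp_all add: finite_Union_card_2)
  have "piH n m p (?E \<union> M) =
      config_expect m p {..<n} (\<lambda>S. (\<Prod>e\<in>F. edge_ind S (\<phi> ` e)) * (\<Prod>e\<in>M. edge_ind S e))"
    using F M card_phi_edge by (subst piH_eq_config_expect) (auto simp: prod_split)
  also have "\<dots> = config_expect m p (\<phi> ` \<Union>F \<union> \<Union>M)
      (\<lambda>S. (\<Prod>e\<in>F. edge_ind S (\<phi> ` e)) * (\<Prod>e\<in>M. edge_ind S e))"
    using \<phi>(2) M(2)
    by (intro config_expect_superset depends_on_mult depends_on_prod_edge_ind
        depends_on_prod depends_on_mono[OF depends_on_edge_ind]) auto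
  also have "\<dots> = config_expect m p (\<phi> ` \<Union>F) (\<lambda>S. \<Prod>e\<in>F. edge_ind S (\<phi> ` e)) *
      config_expect m p (\<Union>M) (\<lambda>S. \<Prod>e\<in>M. edge_ind S e)"
    using fin_F fin_M M(4)
    by (intro config_expect_disjoint_union_mult depends_on_prod_edge_ind
        depends_on_prod depends_on_mono[OF depends_on_edge_ind]) auto
  finally show ?thesis
    using F \<phi>(1) M by (simp add: config_expect_image_edges config_expect_matching mult.commute)
qed

section \<open>The graphs G_i and H_{i,I}\<close>

lemma finite_Ilab [simp]: "finite Ilab"
  by (simp add: Ilab_def)

lemma card_Ilab: "card Ilab = 4"
  by (simp add: Ilab_def)

lemma card_Gedge: "ab \<in> Ilab \<Longrightarrow> card (Gedge i ab) = 2"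
  unfolding Ilab_def by (auto simp: Gedge_def)

lemma inj_on_Gedge: "inj_on (Gedge i) Ilab"
  by (auto simp: inj_on_def Ilab_def Gedge_def doubleton_eq_iff)

lemma finite_Gedge [simp]: "finite (Gedge i ab)"
  by (simp add: Gedge_def split: prod.split)

lemma Gedge_subset_GI_verts: "ab \<in> I \<Longrightarrow> Gedge i ab \<subseteq> GI_verts i I"
  by (auto simp: GI_verts_def GI_edges_def)

lemma GI_verts_mono: "I \<subseteq> J \<Longrightarrow> GI_verts i I \<subseteq> GI_verts i J"
  by (auto simp: GI_verts_def GI_edges_def)

lemma finite_GI_verts: "finite I \<Longrightarrow> finite (GI_verts i I)"
  by (simp add: GI_verts_def GI_edges_def)

lemma piH_is_H:
  assumes "I \<subseteq> Ilab" "is_H n i I H"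
  shows "piH n m p (snd H) =
    phat m p ^ (4 - card I) *
      config_expect m p (GI_verts i Ilab) (\<lambda>S. \<Prod>ab\<in>I. edge_ind S (Gedge i ab))"
proof -
  obtain \<phi> M where \<phi>: "inj_on \<phi> (GI_verts i I)" "\<phi> ` GI_verts i I \<subseteq> fst H"
    and M: "\<forall>e\<in>M. card e = 2 \<and> e \<subseteq> fst H" "finite M" "card M = 4 - card I"
      "\<forall>e\<in>M. \<forall>e'\<in>M. e \<noteq> e' \<longrightarrow> e \<inter> e' = {}" "\<Union>M \<inter> \<phi> ` GI_verts i I = {}"
    and E: "snd H = (`) \<phi> ` GI_edges i I \<union> M"
    using assms(2) unfolding is_H_def Let_def by (elim conjE exE) blast
  have V: "fst H \<subseteq> {..<n}"
    using assms(2) by (simp add: is_H_def Let_def)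
  then have M_edges: "\<forall>e\<in>M. card e = 2 \<and> e \<subseteq> {..<n}"
    and \<phi>_range: "\<phi> ` GI_verts i I \<subseteq> {..<n}"
    using M(1) \<phi>(2) by blast+
  have "pairwise disjnt M"
    using M(4) by (simp add: pairwise_def disjnt_def)
  moreover have "finite (GI_edges i I)" "\<forall>e\<in>GI_edges i I. card e = 2"
    using assms(1) by (auto simp: GI_edges_def card_Gedge finite_subset)
  ultimately have "piH n m p (snd H) =
      phat m p ^ card M * config_expect m p (GI_verts i I) (\<lambda>S. \<Prod>e\<in>GI_edges i I. edge_ind S e)"
    using \<phi>(1) \<phi>_range M(2,5) M_edges unfolding E GI_verts_def
    by (intro piH_copy_union_matching) simp_all
  moreover have "(\<Prod>e\<in>GI_edges i I. edge_ind S e) = (\<Prod>ab\<in>I. edge_ind S (Gedge i ab))" for S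
    unfolding GI_edges_def using inj_on_subset[OF inj_on_Gedge assms(1)] by (simp add: prod.reindex)
  moreover have "config_expect m p (GI_verts i I) (\<lambda>S. \<Prod>ab\<in>I. edge_ind S (Gedge i ab)) =
      config_expect m p (GI_verts i Ilab) (\<lambda>S. \<Prod>ab\<in>I. edge_ind S (Gedge i ab))"
    using assms(1)
    by (intro config_expect_superset[symmetric] depends_on_prod
        depends_on_mono[OF depends_on_edge_ind] finite_GI_verts GI_verts_mono
        Gedge_subset_GI_verts) simp_all
  ultimately show ?thesis
    using M(3) by simp
qed

lemma alternating_sum_piH_H:
  assumes "\<forall>I. I \<subseteq> Ilab \<longrightarrow> is_H n i I (H I)"
  shows "(\<Sum>I\<in>Pow Ilab. (-1) ^ card I * piH n m p (snd (H I))) =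
    config_expect m p (GI_verts i Ilab) (\<lambda>S. \<Prod>ab\<in>Ilab. edge_ind S (Gedge i ab) - phat m p)"
proof -
  have "(-1) ^ card I * piH n m p (snd (H I)) =
      (- phat m p) ^ card (Ilab - I) *
        config_expect m p (GI_verts i Ilab) (\<lambda>S. \<Prod>ab\<in>I. edge_ind S (Gedge i ab))"
    if "I \<subseteq> Ilab" for I
  proof -
    have card: "card I \<le> 4" "card (Ilab - I) = 4 - card I"
      using that card_mono[OF finite_Ilab that]
      by (simp_all add: card_Ilab card_Diff_subset finite_subset)
    then have "(-1 :: real) ^ card (Ilab - I) = (-1) ^ card I"
      using neg_one_power_add_eq_neg_one_power_diff[where 'a = real, of "card I" 4]
      by (simp add: power_add)
    then show ?thesis
      using piH_is_H[OF that assms[rule_format, OF that]] card(2)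
      by (simp add: power_minus[of "phat m p"])
  qed
  then show ?thesis
    by (simp add: config_expect_prod_minus)
qed

lemma config_expect_centred_star:
  "config_expect m p (GI_verts 1 Ilab) (\<lambda>S. \<Prod>ab\<in>Ilab. edge_ind S (Gedge 1 ab) - phat m p) =
    (\<Sum>x\<in>cube m. mu m p x * (\<Sum>y\<in>cube m. mu m p y * (gfun x y - phat m p)) ^ 4)"
proof -
  have verts: "GI_verts 1 Ilab = insert 0 {1, 2, 3, 4}"
    by (auto simp: GI_verts_def GI_edges_def Ilab_def Gedge_def eval_nat_numeral)
  have edges: "(\<Prod>ab\<in>Ilab. edge_ind S (Gedge 1 ab) - phat m p) =
      (\<Prod>b\<in>{1, 2, 3, 4}. gfun (S 0) (S b) - phat m p)" for S
    by (simp add: Ilab_def Gedge_def edge_ind_doubleton eval_nat_numeral)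
  show ?thesis
    unfolding verts edges
    using config_expect_star[of "{1, 2, 3, 4}" 0 m p "\<lambda>x y. gfun x y - phat m p"]
    by (simp add: eval_nat_numeral)
qed

lemma config_expect_centred_cycle:
  "config_expect m p (GI_verts 2 Ilab) (\<lambda>S. \<Prod>ab\<in>Ilab. edge_ind S (Gedge 2 ab) - phat m p) =
    (\<Sum>y\<in>cube m. mu m p y * (\<Sum>z\<in>cube m. mu m p z *
      (\<Sum>w\<in>cube m. mu m p w * ((gfun w y - phat m p) * (gfun w z - phat m p))) ^ 2))"
proof -
  let ?K = "\<lambda>y z w. (gfun w y - phat m p) * (gfun w z - phat m p)"
  have verts: "GI_verts 2 Ilab = insert 2 (insert 3 {0, 1})"
    by (auto simp: GI_verts_def GI_edges_def Ilab_def Gedge_def eval_nat_numeral)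
  have edges: "(\<Prod>ab\<in>Ilab. edge_ind S (Gedge 2 ab) - phat m p) =
      (\<Prod>w\<in>{0, 1}. ?K (S 2) (S 3) (S w))" for S
    by (simp add: Ilab_def Gedge_def edge_ind_doubleton eval_nat_numeral ac_simps)
  show ?thesis
    unfolding verts edges
    using config_expect_bipartite[of "{0, 1}" 2 3 m p ?K] by (simp add: power2_eq_square)
qed

lemma config_expect_centred_path:
  "config_expect m p (GI_verts 3 Ilab) (\<lambda>S. \<Prod>ab\<in>Ilab. edge_ind S (Gedge 3 ab) - phat m p) =
    (\<Sum>y\<in>cube m. mu m p y * (\<Sum>w\<in>cube m. mu m p w * (\<Sum>z\<in>cube m. mu m p z *
      ((gfun w y - phat m p) * (gfun w z - phat m p)))) ^ 2)"
proof -
  let ?K = "\<lambda>y w z. (gfun w y - phat m p) * (gfun w z - phat m p)"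
  let ?s = "\<lambda>y. \<Sum>w\<in>cube m. mu m p w * (\<Sum>z\<in>cube m. mu m p z * ?K y w z)"
  have "GI_verts 3 Ilab = insert 2 ({1, 0} \<union> {3, 4})"
    by (auto simp: GI_verts_def GI_edges_def Ilab_def Gedge_def eval_nat_numeral)
  moreover have "(\<Prod>ab\<in>Ilab. edge_ind S (Gedge 3 ab) - phat m p) =
      ?K (S 2) (S 1) (S 0) * ?K (S 2) (S 3) (S 4)" for S
    by (simp add: Ilab_def Gedge_def edge_ind_doubleton eval_nat_numeral ac_simps)
  moreover have "config_expect m p ({1, 0} \<union> {3, 4}) (\<lambda>S. ?K y (S 1) (S 0) * ?K y (S 3) (S 4)) =
      ?s y ^ 2" for y
  proof -
    have "config_expect m p ({1, 0} \<union> {3, 4}) (\<lambda>S. ?K y (S 1) (S 0) * ?K y (S 3) (S 4)) =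
        config_expect m p {1, 0} (\<lambda>S. ?K y (S 1) (S 0)) *
        config_expect m p {3, 4} (\<lambda>S. ?K y (S 3) (S 4))"
      by (rule config_expect_disjoint_union_mult) (auto simp: depends_on_def)
    then show ?thesis
      by (simp add: config_expect_insert power2_eq_square)
  qed
  ultimately show ?thesis
    by (simp add: config_expect_insert)
qed

section \<open>The contraction norms\<close>

lemma points_0: "points m 0 = {[]}"
  by (auto simp: points_def)

lemma sum_points_1: "(\<Sum>xs\<in>points m 1. f xs) = (\<Sum>x\<in>cube m. f [x])"
proof -
  have "points m 1 = (\<lambda>x. [x]) ` cube m"
    by (auto simp: points_def length_Suc_conv)
  then show ?thesis
    by (simp add: sum.reindex inj_on_def)
qed

lemma sum_points_2: "(\<Sum>xs\<in>points m 2. f xs) = (\<Sum>x\<in>cube m. \<Sum>y\<in>cube m. f [x, y])"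
proof -
  have "points m 2 = (\<lambda>(x, y). [x, y]) ` (cube m \<times> cube m)"
    by (auto simp: points_def length_Suc_conv numeral_2_eq_2)
  moreover have "inj_on (\<lambda>(x, y). [x, y]) (cube m \<times> cube m)"
    by (auto simp: inj_on_def)
  ultimately show ?thesis
    by (simp add: sum.reindex sum.cartesian_product case_prod_unfold)
qed

lemma gbar_1_eq: "gbar m p 1 [x] = (\<Sum>y\<in>cube m. mu m p y * (gfun x y - phat m p))"
  by (simp add: gbar_def g1_def right_diff_distrib sum_subtractf mult.commute
      flip: sum_distrib_left) (simp add: sum_mu_eq_1)

lemma norm2sq_contr_star:
  "norm2sq m p 1 (contr m p (gbar m p 1) 1 (gbar m p 1) 0 1) =
    (\<Sum>x\<in>cube m. mu m p x * (\<Sum>y\<in>cube m. mu m p y * (gfun x y - phat m p)) ^ 4)"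
proof -
  have contr_eq: "contr m p (gbar m p 1) 1 (gbar m p 1) 0 1 [x] = gbar m p 1 [x] ^ 2" for x
    by (simp add: contr_def points_0 mu_prod_def Let_def power2_eq_square)
  show ?thesis
    unfolding norm2sq_def sum_points_1 mu_prod_def contr_eq gbar_1_eq
    by (simp flip: power_mult)
qed

lemma norm2sq_contr_cycle:
  "norm2sq m p 2 (contr m p (gbar m p 2) 2 (gbar m p 2) 1 1) =
    (\<Sum>y\<in>cube m. mu m p y * (\<Sum>z\<in>cube m. mu m p z *
      (\<Sum>w\<in>cube m. mu m p w * ((gfun w y - phat m p) * (gfun w z - phat m p))) ^ 2))"
proof -
  have "contr m p (gbar m p 2) 2 (gbar m p 2) 1 1 [y, z] =
      (\<Sum>w\<in>cube m. mu m p w * ((gfun w y - phat m p) * (gfun w z - phat m p)))" for y z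
    by (simp add: contr_def sum_points_1 sum_points_1[simplified] mu_prod_def gbar_def mult.assoc)
  then show ?thesis
    unfolding norm2sq_def sum_points_2 mu_prod_def
    by (simp add: sum_distrib_left mult.assoc)
qed

lemma norm2sq_contr_path:
  "norm2sq m p 1 (contr m p (gbar m p 2) 2 (gbar m p 1) 1 1) =
    (\<Sum>y\<in>cube m. mu m p y * (\<Sum>w\<in>cube m. mu m p w * (\<Sum>z\<in>cube m. mu m p z *
      ((gfun w y - phat m p) * (gfun w z - phat m p)))) ^ 2)"
proof -
  have "contr m p (gbar m p 2) 2 (gbar m p 1) 1 1 [y] =
      (\<Sum>w\<in>cube m. mu m p w * (gbar m p 2 [w, y] * gbar m p 1 [w]))" for y
    by (simp add: contr_def sum_points_1 sum_points_1[simplified] mu_prod_def mult.assoc)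
  moreover have "gbar m p 2 [w, y] * gbar m p 1 [w] =
      (\<Sum>z\<in>cube m. mu m p z * ((gfun w y - phat m p) * (gfun w z - phat m p)))" for w y
    unfolding gbar_1_eq by (simp add: gbar_def sum_distrib_left ac_simps)
  ultimately show ?thesis
    unfolding norm2sq_def sum_points_1 mu_prod_def by simp
qed

theorem lemma6p2:
  fixes n m i :: nat and p :: real
    and H :: "(nat \<times> nat) set \<Rightarrow> nat set \<times> nat set set"
  assumes "n \<ge> 8" and "0 < p" and "p < 1" and "i \<in> {1, 2, 3}"
    and "\<forall>I. I \<subseteq> Ilab \<longrightarrow> is_H n i I (H I)"
  shows "(case lpar i of (l1, l2, l3, l4) \<Rightarrow>
           norm2sq m p ((l3 - l2) + (l1 - l3) + (l4 - l3))
             (contr m p (gbar m p l1) l1 (gbar m p l4) l2 l3))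
         = (\<Sum>I\<in>Pow Ilab. (-1) ^ card I * piH n m p (snd (H I)))"
proof -
  have alternating_sum: "(\<Sum>I\<in>Pow Ilab. (-1) ^ card I * piH n m p (snd (H I))) =
      config_expect m p (GI_verts i Ilab) (\<lambda>S. \<Prod>ab\<in>Ilab. edge_ind S (Gedge i ab) - phat m p)"
    using assms(5) by (rule alternating_sum_piH_H)
  from assms(4) consider "i = 1" | "i = 2" | "i = 3"
    by blast
  then show ?thesis
  proof cases
    case 1
    then show ?thesis
      using alternating_sum norm2sq_contr_star config_expect_centred_star by (simp add: lpar_def)
  next
    case 2
    then show ?thesis
      using alternating_sum norm2sq_contr_cycle config_expect_centred_cycle
      by (simp add: lpar_def numeral_2_eq_2)
  next
    case 3
    then show ?thesis
      using alternating_sum norm2sq_contr_path config_expect_centred_path by (simp add: lpar_def)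
  qed
qed

end
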